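(* Let $n\ge 4$ be an integer and let $\Lambda_n$ denote the Lebesgue constant of Lagrange interpolation by polynomials of total degree at most $n$ at the equally spaced nodes of a triangle. Then $$\Lambda_n\le \Big(7+\mu_n\Big)\,\frac{2^{n+1}}{e\,n(\ln n-\ln 2)}\Big(1+\frac{15}{n-3}\Big),\qquad\text{where}\qquad \mu_n\le \frac{3e\,n(\ln n)^3}{2^{n/3}}+\frac{e\,n^2\ln n}{2^n}.$$ In particular $\mu_n\to 0$ as $n\to\infty$.
   Context: Let $\Delta\subset\mathbb{R}^2$ be a non-degenerate triangle; points of $\Delta$ are identified with their barycentric coordinates $\lambda=(\lambda_1,\lambda_2,\lambda_3)$, $\lambda_r\ge 0$, $\lambda_1+\lambda_2+\lambda_3=1$. For an integer $n\ge1$ let $I=\{i=(i_1,i_2,i_3)\in\mathbb{Z}_+^3: i_1+i_2+i_3=n\}$ and let the nodes be $a_i=(i_1/n,i_2/n,i_3/n)$, $i\in I$. The Lagrange fundamental polynomials $l_i$, $i\in I$, are the polynomials of total degree $\le n$ with $l_i(a_j)=\delta_{ij}$; explicitly $l_i(\lambda)=\prod_{s=1}^{3}\frac{1}{i_s!}\prod_{t=0}^{i_s-1}(n\lambda_s-t)$. The Lebesgue function is $\mathcal{L}_n(\lambda)=\sum_{i\in I}|l_i(\lambda)|$ and the Lebesgue constant is $\Lambda_n=\max_{\lambda\in\Delta}\mathcal{L}_n(\lambda)$, which equals the operator norm on $C(\Delta)$ of the map $f\mapsto \sum_{i\in I}f(a_i)l_i$. *)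

theory Defs
  imports Complex_Main
begin

definition idx_set :: "nat \<Rightarrow> (nat \<times> nat \<times> nat) set" where
  "idx_set n = {(i1, i2, i3). i1 + i2 + i3 = n}"

definition bary_simplex :: "(real \<times> real \<times> real) set" where
  "bary_simplex = {(l1, l2, l3). l1 \<ge> 0 \<and> l2 \<ge> 0 \<and> l3 \<ge> 0 \<and> l1 + l2 + l3 = 1}"

definition lag_factor :: "nat \<Rightarrow> nat \<Rightarrow> real \<Rightarrow> real" where
  "lag_factor n k x = (\<Prod>t<k. (real n * x - real t)) / fact k"

definition lagrange_fund :: "nat \<Rightarrow> nat \<times> nat \<times> nat \<Rightarrow> real \<times> real \<times> real \<Rightarrow> real" where
  "lagrange_fund n i l = (case i of (i1, i2, i3) \<Rightarrow> case l of (l1, l2, l3) \<Rightarrow>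
      lag_factor n i1 l1 * lag_factor n i2 l2 * lag_factor n i3 l3)"

definition lebesgue_fun :: "nat \<Rightarrow> real \<times> real \<times> real \<Rightarrow> real" where
  "lebesgue_fun n l = (\<Sum>i\<in>idx_set n. \<bar>lagrange_fund n i l\<bar>)"

definition lebesgue_const :: "nat \<Rightarrow> real" where
  "lebesgue_const n = (SUP l\<in>bary_simplex. lebesgue_fun n l)"

end

theory Submission
  imports
    Defs
    "HOL-Computational_Algebra.Formal_Power_Series"
    "HOL-Analysis.Convex"
    "HOL-Analysis.Harmonic_Numbers"
    "HOL-Real_Asymp.Real_Asymp"
begin

text \<open>Put \<open>y\<^sub>s = n \<lambda>\<^sub>s\<close>. Each Lagrange factor is the generalized binomial coefficient
  \<open>y\<^sub>s gchoose i\<^sub>s\<close>, so the Lebesgue function at \<open>\<lambda>\<close> is the coefficient of \<open>X^n\<close> in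
  \<open>|(1+X)^y\<^sub>1| |(1+X)^y\<^sub>2| |(1+X)^y\<^sub>3|\<close>, where \<open>|f|\<close> takes absolute values of coefficients.
  Write \<open>y\<^sub>s = m\<^sub>s + t\<^sub>s\<close> with \<open>m\<^sub>s\<close> an integer and \<open>0 \<le> t\<^sub>s < 1\<close>. For \<open>0 \<le> t \<le> 1\<close> one has
  \<open>|(1+X)^t| = 2 - (1-X)^t\<close>, so the product is coefficientwise at most
  \<open>(2 - (1-X)^t\<^sub>1) (2 - (1-X)^t\<^sub>2) (2 - (1-X)^t\<^sub>3) (1+X)^M\<close> with \<open>M = m\<^sub>1 + m\<^sub>2 + m\<^sub>3\<close>.
  Expanding with \<open>(1-X)^a (1-X)^b = (1-X)^(a+b)\<close> leaves sums \<open>\<Sum>\<^sub>Q C(M,n-Q) (-1)^Q C(u,Q)\<close>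
  where \<open>u\<close> is a fractional part, a sum of two, or the integer \<open>K = n - M \<le> 2\<close>. The first kind
  is controlled by \<open>|C(t,Q)| \<le> (t/Q) Q^(-t)\<close> and \<open>max\<^sub>t t e^(-t L) = 1/(e L)\<close> with
  \<open>L = ln (n/2)\<close>, the second by \<open>|C(u,Q)| \<le> 2/(Q(Q-1))\<close> for \<open>1 \<le> u \<le> 2\<close>, the third by
  Vandermonde's identity.\<close>

section \<open>Generalized binomial coefficients\<close>

lemma gbinomial_Suc_right:
  "(a::real) gchoose (Suc k) = (a gchoose k) * (a - of_nat k) / (of_nat k + 1)"
  by (simp add: gbinomial_prod_rev field_simps)

lemma abs_neg_one_power_mult: "\<bar>(-1)^k * x\<bar> = \<bar>x :: real\<bar>"
  by (simp add: abs_mult)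

lemma gbinomial_alternating_nonpos:
  assumes "0 \<le> t" "t \<le> 1" "k \<ge> 1"
  shows "(-1)^k * ((t::real) gchoose k) \<le> 0"
  using assms(3)
proof (induction k rule: dec_induct)
  case base
  then show ?case using assms by simp
next
  case (step k)
  have "(-1)^Suc k * (t gchoose Suc k) = ((-1)^k * (t gchoose k)) * ((of_nat k - t) / (of_nat k + 1))"
    by (simp add: gbinomial_Suc_right field_simps)
  also have "\<dots> \<le> 0"
    by (rule mult_nonpos_nonneg) (use step assms in auto)
  finally show ?case .
qed

lemma abs_gbinomial_le_harm:
  assumes "0 \<le> t" "t \<le> 1"
  shows "\<bar>(t::real) gchoose Suc k\<bar> \<le> t / real (Suc k) * exp (- t * harm k)"
proof (induction k)
  case 0
  then show ?case using assms by (simp add: harm_def)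
next
  case (Suc k)
  define j where "j = real (Suc k)"
  have j: "1 \<le> j" "t \<le> j" using assms by (auto simp: j_def)
  have "t gchoose Suc (Suc k) = (t gchoose Suc k) * (t - j) / (j + 1)"
    unfolding j_def by (rule gbinomial_Suc_right)
  hence "\<bar>t gchoose Suc (Suc k)\<bar> = \<bar>t gchoose Suc k\<bar> * ((j - t) / (j + 1))"
    using j by (simp add: abs_mult abs_divide)
  also have "\<dots> \<le> t / j * exp (- t * harm k) * ((j - t) / (j + 1))"
    using Suc j by (intro mult_right_mono) (auto simp: j_def)
  also have "\<dots> = t / (j + 1) * exp (- t * harm k) * ((j - t) / j)"
    using j by (simp add: field_simps)
  also have "\<dots> \<le> t / (j + 1) * exp (- t * harm k) * exp (- (t / j))"
  proof -
    have "(j - t) / j = 1 + - (t / j)" using j by (simp add: field_simps)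
    also have "\<dots> \<le> exp (- (t / j))" by (rule exp_ge_add_one_self)
    finally show ?thesis using assms j by (intro mult_left_mono) auto
  qed
  also have "\<dots> = t / real (Suc (Suc k)) * exp (- t * harm (Suc k))"
    by (simp add: j_def harm_Suc exp_add[symmetric] divide_inverse algebra_simps)
  finally show ?case .
qed

lemma abs_gbinomial_le_exp_ln:
  assumes "0 \<le> t" "t \<le> 1" "k \<ge> 1"
  shows "\<bar>(t::real) gchoose k\<bar> \<le> t / real k * exp (- t * ln (real k))"
proof -
  obtain j where k: "k = Suc j" using assms(3) by (cases k) auto
  have "ln (real k) \<le> harm j" using ln_le_harm[of j] k by (simp add: add.commute)
  hence "exp (- t * harm j) \<le> exp (- t * ln (real k))"
    using assms(1) by (simp add: mult_left_mono)
  hence "t / real k * exp (- t * harm j) \<le> t / real k * exp (- t * ln (real k))"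
    using assms(1) by (intro mult_left_mono) auto
  thus ?thesis using abs_gbinomial_le_harm[OF assms(1,2), of j] k by simp
qed

lemma abs_gbinomial_le_of_le_2:
  assumes "1 \<le> u" "u \<le> 2" "k \<ge> 2"
  shows "\<bar>(u::real) gchoose k\<bar> \<le> 2 / (real k * (real k - 1))"
  using assms(3)
proof (induction k rule: dec_induct)
  case base
  have "u gchoose 2 = u * (u - 1) / 2"
    by (simp add: gbinomial_Suc_right[of _ 1, simplified] numeral_2_eq_2)
  moreover have "u * (u - 1) \<le> 2 * 1" using assms by (intro mult_mono) auto
  moreover have "0 \<le> u * (u - 1)" using assms by simp
  ultimately show ?case by simp
next
  case (step k)
  have "\<bar>u gchoose Suc k\<bar> = \<bar>u gchoose k\<bar> * ((real k - u) / (real k + 1))"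
    using step assms by (simp add: gbinomial_Suc_right abs_mult abs_divide)
  also have "\<dots> \<le> 2 / (real k * (real k - 1)) * ((real k - 1) / (real k + 1))"
    using step assms by (intro mult_mono divide_right_mono) auto
  also have "\<dots> = 2 / (real (Suc k) * (real (Suc k) - 1))"
    using step by (simp add: divide_simps) (simp add: algebra_simps)
  finally show ?case .
qed

section \<open>Coefficientwise comparison of power series\<close>

definition fps_abs :: "real fps \<Rightarrow> real fps" where
  "fps_abs f = Abs_fps (\<lambda>k. \<bar>fps_nth f k\<bar>)"

definition fps_coeff_le :: "real fps \<Rightarrow> real fps \<Rightarrow> bool" where
  "fps_coeff_le f g \<longleftrightarrow> (\<forall>k. fps_nth f k \<le> fps_nth g k)"

text \<open>The series of \<open>(1 - X) powr u\<close>.\<close>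
definition fps_binomial_neg :: "real \<Rightarrow> real fps" where
  "fps_binomial_neg u = Abs_fps (\<lambda>k. (-1)^k * (u gchoose k))"

lemma fps_abs_nth [simp]: "fps_nth (fps_abs f) k = \<bar>fps_nth f k\<bar>"
  by (simp add: fps_abs_def)

lemma fps_binomial_neg_nth [simp]: "fps_nth (fps_binomial_neg u) k = (-1)^k * (u gchoose k)"
  by (simp add: fps_binomial_neg_def)

lemma fps_coeff_le_abs_mult: "fps_coeff_le (fps_abs (f * g)) (fps_abs f * fps_abs g)"
  unfolding fps_coeff_le_def fps_mult_nth fps_abs_nth
  by (auto intro: order_trans[OF sum_abs] simp: abs_mult)

lemma fps_coeff_le_0_abs: "fps_coeff_le 0 (fps_abs f)"
  by (simp add: fps_coeff_le_def)

lemma fps_coeff_le_0_mult: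
  "fps_coeff_le 0 f \<Longrightarrow> fps_coeff_le 0 g \<Longrightarrow> fps_coeff_le 0 (f * g)"
  unfolding fps_coeff_le_def fps_mult_nth by (auto intro!: sum_nonneg)

lemma fps_coeff_le_mult:
  assumes "fps_coeff_le 0 f" "fps_coeff_le 0 h" "fps_coeff_le f g" "fps_coeff_le h k"
  shows "fps_coeff_le (f * h) (g * k)"
  unfolding fps_coeff_le_def fps_mult_nth
proof (intro allI sum_mono)
  fix n i
  show "fps_nth f i * fps_nth h (n - i) \<le> fps_nth g i * fps_nth k (n - i)"
    using assms unfolding fps_coeff_le_def by (intro mult_mono) (auto intro: order_trans)
qed

lemma fps_binomial_neg_add:
  "fps_binomial_neg a * fps_binomial_neg b = fps_binomial_neg (a + b)"
proof (rule fps_ext)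
  fix n
  have "fps_nth (fps_binomial_neg a * fps_binomial_neg b) n
      = (\<Sum>i=0..n. (-1)^n * ((a gchoose i) * (b gchoose (n - i))))"
    unfolding fps_mult_nth fps_binomial_neg_nth
  proof (intro sum.cong refl)
    fix i assume "i \<in> {0..n}"
    hence "(-1::real)^i * (-1)^(n - i) = (-1)^n" by (simp flip: power_add)
    thus "(-1)^i * (a gchoose i) * ((-1)^(n - i) * (b gchoose (n - i)))
        = (-1)^n * ((a gchoose i) * (b gchoose (n - i)))"
      by (metis mult.assoc mult.left_commute)
  qed
  also have "\<dots> = (-1)^n * ((a + b) gchoose n)"
    by (simp add: sum_distrib_left[symmetric] gbinomial_Vandermonde)
  finally show "fps_nth (fps_binomial_neg a * fps_binomial_neg b) n = fps_nth (fps_binomial_neg (a + b)) n"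
    by simp
qed

lemma fps_abs_binomial_of_nat: "fps_abs (fps_binomial (of_nat m)) = fps_binomial (of_nat m)"
  by (rule fps_ext) (simp flip: binomial_gbinomial)

text \<open>For \<open>k \<ge> 1\<close> the coefficient \<open>t gchoose k\<close> has the sign of \<open>(-1)^(k-1)\<close>.\<close>
lemma fps_abs_binomial_unit_interval:
  assumes "0 \<le> t" "t \<le> 1"
  shows "fps_abs (fps_binomial t) = 2 - fps_binomial_neg t"
proof (rule fps_ext)
  fix k
  show "fps_nth (fps_abs (fps_binomial t)) k = fps_nth (2 - fps_binomial_neg t) k"
  proof (cases "k = 0")
    case False
    hence "(-1)^k * (t gchoose k) \<le> 0" using gbinomial_alternating_nonpos assms by simp
    moreover have "\<bar>(-1)^k * (t gchoose k)\<bar> = \<bar>t gchoose k\<bar>" by (rule abs_neg_one_power_mult)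
    ultimately show ?thesis using False by (simp add: fps_numeral_nth)
  qed simp
qed

lemma fps_abs_binomial_le:
  assumes "0 \<le> t" "t \<le> 1"
  shows "fps_coeff_le (fps_abs (fps_binomial (of_nat m + t)))
           (fps_binomial (of_nat m) * (2 - fps_binomial_neg t))"
    and "fps_coeff_le 0 (fps_binomial (of_nat m) * (2 - fps_binomial_neg t))"
proof -
  show "fps_coeff_le (fps_abs (fps_binomial (of_nat m + t)))
          (fps_binomial (of_nat m) * (2 - fps_binomial_neg t))"
    using fps_coeff_le_abs_mult[of "fps_binomial (of_nat m)" "fps_binomial t"]
    by (simp add: fps_binomial_add_mult fps_abs_binomial_of_nat fps_abs_binomial_unit_interval assms)
  show "fps_coeff_le 0 (fps_binomial (of_nat m) * (2 - fps_binomial_neg t))"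
    using fps_coeff_le_0_mult[OF fps_coeff_le_0_abs fps_coeff_le_0_abs,
        of "fps_binomial (of_nat m)" "fps_binomial t"]
    by (simp add: fps_abs_binomial_of_nat fps_abs_binomial_unit_interval assms)
qed

section \<open>Binomial sums\<close>

lemma sum_binomial_inj_le_power:
  assumes "inj_on g A" "finite A"
  shows "(\<Sum>k\<in>A. real (n choose g k)) \<le> 2 ^ n"
proof -
  have "(\<Sum>k\<in>A. real (n choose g k)) = (\<Sum>j\<in>g ` A. real (n choose j))"
    using assms(1) by (simp add: sum.reindex)
  also have "\<dots> = (\<Sum>j\<in>g ` A \<inter> {..n}. real (n choose j))"
    by (rule sum.mono_neutral_right) (auto simp: assms(2))
  also have "\<dots> \<le> (\<Sum>j\<le>n. real (n choose j))"
    by (intro sum_mono2) auto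
  also have "\<dots> = 2 ^ n"
    by (simp flip: of_nat_sum add: choose_row_sum)
  finally show ?thesis .
qed

lemma of_nat_Suc_times_binomial:
  "real (Suc n) * real (n choose k) = real (Suc k) * real (Suc n choose Suc k)"
  by (simp only: of_nat_mult[symmetric] Suc_times_binomial_eq mult.commute)

lemma binomial_div_Suc:
  "real (n choose k) / real (Suc k) = real (Suc n choose Suc k) / real (Suc n)"
  using of_nat_Suc_times_binomial[of n k] by (simp add: field_simps del: of_nat_Suc)

lemma binomial_absorption_Suc_Suc:
  "real (Suc (Suc n)) * real (Suc n) * real (n choose k)
    = real (Suc (Suc k)) * real (Suc k) * real (Suc (Suc n) choose Suc (Suc k))"
proof -
  have "real (Suc (Suc n)) * real (Suc n) * real (n choose k)
      = real (Suc k) * (real (Suc (Suc n)) * real (Suc n choose Suc k))"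
    by (simp only: mult.assoc of_nat_Suc_times_binomial mult.left_commute)
  also have "\<dots> = real (Suc (Suc k)) * real (Suc k) * real (Suc (Suc n) choose Suc (Suc k))"
    by (simp only: of_nat_Suc_times_binomial mult_ac)
  finally show ?thesis .
qed

text \<open>The estimate rests on \<open>1/Q \<le> 1/(Q+1) + 3/((Q+1)(Q+2))\<close>, and both terms on the right
  are absorbed into binomial coefficients of rows \<open>n+1\<close> and \<open>n+2\<close>.\<close>
lemma sum_binomial_div_le:
  assumes "n \<ge> 1"
  shows "(\<Sum>Q=1..n. real (n choose Q) / real Q) \<le> 2 ^ (n + 1) / real n * (1 + 6 / real n)"
proof -
  have shift2: "real (n choose Q) / (real (Suc Q) * real (Suc (Suc Q)))
      = real (Suc (Suc n) choose Suc (Suc Q)) / (real (Suc n) * real (Suc (Suc n)))" for Q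
    using binomial_div_Suc[of n Q] binomial_div_Suc[of "Suc n" "Suc Q"]
    by (simp only: divide_divide_eq_left[symmetric]) (simp add: field_simps del: of_nat_Suc)
  have "(\<Sum>Q=1..n. real (n choose Q) / real Q)
      \<le> (\<Sum>Q=1..n. real (n choose Q) / real (Suc Q)
                   + 3 * (real (n choose Q) / (real (Suc Q) * real (Suc (Suc Q)))))"
  proof (rule sum_mono)
    fix Q assume "Q \<in> {1..n}"
    hence "1 / real Q \<le> 1 / real (Suc Q) + 3 / (real (Suc Q) * real (Suc (Suc Q)))"
      by (simp add: divide_simps) (simp add: algebra_simps)
    from mult_left_mono[OF this, of "real (n choose Q)"]
    show "real (n choose Q) / real Q \<le> real (n choose Q) / real (Suc Q)
           + 3 * (real (n choose Q) / (real (Suc Q) * real (Suc (Suc Q))))"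
      by (simp add: algebra_simps del: of_nat_Suc)
  qed
  also have "\<dots> = (\<Sum>Q=1..n. real (Suc n choose Suc Q)) / real (Suc n)
      + 3 * (\<Sum>Q=1..n. real (Suc (Suc n) choose Suc (Suc Q))) / (real (Suc n) * real (Suc (Suc n)))"
    by (simp only: binomial_div_Suc shift2 sum.distrib sum_divide_distrib sum_distrib_left
        times_divide_eq_right)
  also have "\<dots> \<le> 2 ^ Suc n / real (Suc n) + 3 * 2 ^ Suc (Suc n) / (real (Suc n) * real (Suc (Suc n)))"
  proof -
    have "(\<Sum>Q=1..n. real (Suc n choose Suc Q)) \<le> 2 ^ Suc n"
      using sum_binomial_inj_le_power[of Suc "{1..n}" "Suc n"] by (simp del: binomial_Suc_Suc)
    moreover have "(\<Sum>Q=1..n. real (Suc (Suc n) choose Suc (Suc Q))) \<le> 2 ^ Suc (Suc n)"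
      using sum_binomial_inj_le_power[of "Suc \<circ> Suc" "{1..n}" "Suc (Suc n)"]
      by (simp add: inj_on_def del: binomial_Suc_Suc)
    ultimately show ?thesis by (intro add_mono divide_right_mono mult_left_mono) auto
  qed
  also have "\<dots> = 2 ^ (n + 1) * (1 / (real n + 1) + 6 / ((real n + 1) * (real n + 2)))"
    by (simp add: algebra_simps)
  also have "\<dots> \<le> 2 ^ (n + 1) * (1 / real n * (1 + 6 / real n))"
    using assms by (intro mult_left_mono) (simp_all add: divide_simps, simp add: algebra_simps)
  finally show ?thesis by simp
qed

lemma exp_neg_mult_ln_le:
  fixes t x L :: real
  assumes "0 \<le> t" "t \<le> 1" "x > 0"
  shows "exp (- t * ln x) \<le> exp (- t * L) * (1 - t + t * exp L / x)"
proof -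
  have "exp (- t * ln x) = exp (- t * L + ((1 - t) * 0 + t * (L - ln x)))"
    by (simp add: algebra_simps)
  also have "\<dots> = exp (- t * L) * exp ((1 - t) * 0 + t * (L - ln x))"
    by (rule exp_add)
  also have "\<dots> \<le> exp (- t * L) * ((1 - t) * exp 0 + t * exp (L - ln x))"
    using convex_onD[OF exp_convex, of t 0 "L - ln x"] assms by (intro mult_left_mono) auto
  finally show ?thesis using assms by (simp add: exp_diff)
qed

lemma mult_exp_neg_mult_le:
  fixes t L :: real
  assumes "L > 0"
  shows "t * exp (- t * L) \<le> 1 / (exp 1 * L)"
proof -
  have "t * L \<le> exp (t * L - 1)"
    using exp_ge_add_one_self[of "t * L - 1"] by simp
  hence "t * L * exp 1 \<le> exp (t * L)" by (simp add: exp_diff field_simps)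
  hence "t * L * exp 1 * exp (- t * L) \<le> exp (t * L) * exp (- t * L)"
    by (rule mult_right_mono) simp
  hence "t * exp (- t * L) * (exp 1 * L) \<le> 1" by (simp flip: exp_add add: algebra_simps)
  thus ?thesis using assms by (simp add: field_simps)
qed

lemma binomial_mult_abs_gbinomial_le:
  assumes "0 \<le> t" "t \<le> 1" "Q \<in> {1..n}"
  shows "real ((n - 1) choose (Q - 1)) * \<bar>t gchoose Q\<bar>
    \<le> t / real n * exp (- t * L)
        * ((1 - t) * real (n choose Q) + t * exp L * (real (n choose Q) / real Q))"
proof -
  have absorb: "real ((n - 1) choose (Q - 1)) / real Q = real (n choose Q) / real n"
    using binomial_div_Suc[of "n - 1" "Q - 1"] assms(3) by (simp del: binomial_Suc_Suc of_nat_Suc)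
  have "real ((n - 1) choose (Q - 1)) * \<bar>t gchoose Q\<bar>
      \<le> real ((n - 1) choose (Q - 1)) * (t / real Q * exp (- t * ln (real Q)))"
    using abs_gbinomial_le_exp_ln[OF assms(1,2), of Q] assms(3) by (intro mult_left_mono) auto
  also have "\<dots> = t * (real ((n - 1) choose (Q - 1)) / real Q) * exp (- t * ln (real Q))"
    by simp
  also have "\<dots> = t * (real (n choose Q) / real n) * exp (- t * ln (real Q))"
    by (simp only: absorb)
  also have "\<dots> \<le> t * (real (n choose Q) / real n) * (exp (- t * L) * (1 - t + t * exp L / real Q))"
    using exp_neg_mult_ln_le[OF assms(1,2), of "real Q" L] assms by (intro mult_left_mono) auto
  finally show ?thesis using assms(3) by (simp add: field_simps)
qed

text \<open>The convexity bound on \<open>Q powr (-t)\<close> is taken at \<open>e^L = n/2\<close>, where both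
  \<open>\<Sum> C(n,Q)\<close> and \<open>(n/2) \<Sum> C(n,Q)/Q\<close> are about \<open>2^n\<close>.\<close>
lemma sum_binomial_abs_gbinomial_le:
  assumes "n \<ge> 3" "0 \<le> t" "t \<le> 1"
  shows "(\<Sum>Q=1..n. real ((n - 1) choose (Q - 1)) * \<bar>t gchoose Q\<bar>)
          \<le> 2 ^ n * (1 + 6 / real n) / (real n * exp 1 * (ln (real n) - ln 2))"
proof -
  define L where "L = ln (real n) - ln 2"
  have L: "L > 0" "exp L = real n / 2"
    using assms unfolding L_def by (simp_all add: ln_less_cancel_iff exp_diff)
  have n: "real n > 0" using assms by simp
  have term_le: "real ((n - 1) choose (Q - 1)) * \<bar>t gchoose Q\<bar>
       \<le> t / real n * exp (- t * L)
           * ((1 - t) * real (n choose Q) + t * (real n / 2) * (real (n choose Q) / real Q))"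
    if "Q \<in> {1..n}" for Q
    using binomial_mult_abs_gbinomial_le[OF assms(2,3) that, of L] by (simp only: L(2))
  have linear: "(\<Sum>Q\<in>A. c * (a * f Q + b * g Q)) = c * (a * sum f A + b * sum g A)"
    for c a b :: real and f g and A :: "nat set"
    by (simp add: sum.distrib algebra_simps flip: sum_distrib_left sum_distrib_right)
  have "(\<Sum>Q=1..n. real ((n - 1) choose (Q - 1)) * \<bar>t gchoose Q\<bar>)
      \<le> (\<Sum>Q=1..n. t / real n * exp (- t * L)
           * ((1 - t) * real (n choose Q) + t * (real n / 2) * (real (n choose Q) / real Q)))"
    by (rule sum_mono) (rule term_le)
  also have "\<dots> = t / real n * exp (- t * L) * ((1 - t) * (\<Sum>Q=1..n. real (n choose Q))
           + t * (real n / 2) * (\<Sum>Q=1..n. real (n choose Q) / real Q))"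
    by (rule linear)
  also have "\<dots> \<le> t / real n * exp (- t * L)
        * ((1 - t) * 2 ^ n + t * (real n / 2) * (2 ^ (n + 1) / real n * (1 + 6 / real n)))"
    using assms sum_binomial_inj_le_power[of id "{1..n}" n] sum_binomial_div_le[of n]
    by (intro mult_left_mono add_mono) auto
  also have "\<dots> = (t * exp (- t * L)) * (2 ^ n * (1 + t * (6 / real n)) / real n)"
    using n by (simp add: field_simps)
  also have "\<dots> \<le> 1 / (exp 1 * L) * (2 ^ n * (1 + 6 / real n) / real n)"
  proof -
    have "t * (6 / real n) \<le> 6 / real n" using assms n by (intro mult_left_le_one_le) auto
    thus ?thesis using mult_exp_neg_mult_le[OF L(1), of t] assms n L
      by (intro mult_mono divide_right_mono) auto
  qed
  also have "\<dots> = 2 ^ n * (1 + 6 / real n) / (real n * exp 1 * L)"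
    by (simp add: field_simps)
  finally show ?thesis unfolding L_def .
qed

section \<open>Expanding the majorant\<close>

text \<open>The coefficient of \<open>X^n\<close> in \<open>((1 - X) powr u - 1) (1 + X)^M\<close>.\<close>
definition binomial_tail :: "nat \<Rightarrow> nat \<Rightarrow> real \<Rightarrow> real" where
  "binomial_tail M n u = (\<Sum>Q=1..n. real (M choose (n - Q)) * ((-1)^Q * (u gchoose Q)))"

lemma fps_nth_binomial_neg_mult:
  "fps_nth (fps_binomial_neg u * fps_binomial (of_nat M)) n = real (M choose n) + binomial_tail M n u"
  unfolding fps_mult_nth binomial_tail_def
  by (simp add: sum.atLeast_Suc_atMost binomial_gbinomial[symmetric] mult_ac)

lemma binomial_tail_frac_ge:
  assumes "n \<ge> 3" "0 \<le> t" "t \<le> 1" "M \<le> n" "t = 0 \<or> M < n"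
  shows "- binomial_tail M n t \<le> 2 ^ n * (1 + 6 / real n) / (real n * exp 1 * (ln (real n) - ln 2))"
proof -
  have "- binomial_tail M n t \<le> (\<Sum>Q=1..n. real ((n - 1) choose (Q - 1)) * \<bar>t gchoose Q\<bar>)"
    unfolding binomial_tail_def sum_negf[symmetric]
  proof (rule sum_mono)
    fix Q assume Q: "Q \<in> {1..n}"
    show "- (real (M choose (n - Q)) * ((-1)^Q * (t gchoose Q)))
          \<le> real ((n - 1) choose (Q - 1)) * \<bar>t gchoose Q\<bar>"
    proof (cases "t = 0")
      case True
      with Q show ?thesis by (simp add: gbinomial_0_left)
    next
      case False
      hence "M choose (n - Q) \<le> (n - 1) choose (n - Q)"
        using assms by (intro binomial_right_mono) auto
      also have "\<dots> = (n - 1) choose (Q - 1)"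
        using Q binomial_symmetric[of "Q - 1" "n - 1"] by auto
      finally have "real (M choose (n - Q)) \<le> real ((n - 1) choose (Q - 1))" by simp
      have "- ((-1)^Q * (t gchoose Q)) \<le> \<bar>t gchoose Q\<bar>"
        using abs_ge_minus_self[of "(-1)^Q * (t gchoose Q)"] by (simp only: abs_neg_one_power_mult)
      hence "real (M choose (n - Q)) * (- ((-1)^Q * (t gchoose Q)))
          \<le> real (M choose (n - Q)) * \<bar>t gchoose Q\<bar>"
        by (rule mult_left_mono) simp
      also have "\<dots> \<le> real ((n - 1) choose (Q - 1)) * \<bar>t gchoose Q\<bar>"
        using \<open>real (M choose (n - Q)) \<le> _\<close> by (rule mult_right_mono) simp
      finally show ?thesis by simp
    qed
  qed
  also have "\<dots> \<le> 2 ^ n * (1 + 6 / real n) / (real n * exp 1 * (ln (real n) - ln 2))"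
    by (rule sum_binomial_abs_gbinomial_le[OF assms(1-3)])
  finally show ?thesis .
qed

lemma binomial_mult_alternating_gbinomial_le:
  assumes "1 \<le> u" "u \<le> 2" "2 \<le> Q" "Q \<le> n"
  shows "real ((n - 2) choose (n - Q)) * ((-1)^Q * (u gchoose Q))
          \<le> 2 / (real n * (real n - 1)) * real (n choose Q)"
proof -
  have nQ: "n - Q = (n - 2) - (Q - 2)" using assms by simp
  have "(n - 2) choose (n - Q) = (n - 2) choose (Q - 2)"
    unfolding nQ by (rule binomial_symmetric[symmetric]) (use assms in simp)
  moreover have "(-1)^Q * (u gchoose Q) \<le> 2 / (real Q * (real Q - 1))"
    using abs_gbinomial_le_of_le_2[OF assms(1-3)] abs_ge_self[of "(-1)^Q * (u gchoose Q)"]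
    by (simp only: abs_neg_one_power_mult)
  ultimately have "real ((n - 2) choose (n - Q)) * ((-1)^Q * (u gchoose Q))
      \<le> real ((n - 2) choose (Q - 2)) * (2 / (real Q * (real Q - 1)))"
    by (metis mult_left_mono of_nat_0_le_iff)
  also have "real n * (real n - 1) * real ((n - 2) choose (Q - 2))
      = real Q * (real Q - 1) * real (n choose Q)"
  proof -
    obtain J where J: "Q = Suc (Suc J)" using assms(3) by (metis add_2_eq_Suc le_Suc_ex)
    obtain N where N: "n = Suc (Suc N)" using assms(3,4) by (metis add_2_eq_Suc le_Suc_ex le_trans)
    show ?thesis
      using binomial_absorption_Suc_Suc[of N J] unfolding N J by (simp del: binomial_Suc_Suc)
  qed
  hence "real ((n - 2) choose (Q - 2)) * (2 / (real Q * (real Q - 1)))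
      = 2 / (real n * (real n - 1)) * real (n choose Q)"
    using assms by (simp add: field_simps)
  finally show ?thesis .
qed

lemma binomial_tail_pair_le:
  assumes "0 \<le> u" "u \<le> real K" "K \<le> 2" "M + K = n" "n \<ge> 2"
  shows "binomial_tail M n u \<le> 2 ^ (n + 1) / (real n * (real n - 1))"
proof (cases "u \<le> 1")
  case True
  have "binomial_tail M n u \<le> (\<Sum>Q=1..n. 0)"
    unfolding binomial_tail_def using True assms
    by (intro sum_mono mult_nonneg_nonpos gbinomial_alternating_nonpos) auto
  also have "\<dots> \<le> 2 ^ (n + 1) / (real n * (real n - 1))" using assms by simp
  finally show ?thesis .
next
  case False
  hence M: "M = n - 2" using assms by linarith
  have u: "1 \<le> u" "u \<le> 2" using False assms by auto
  have nn: "real n * (real n - 1) > 0" using assms by simp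
  have "binomial_tail M n u \<le> (\<Sum>Q=1..n. 2 / (real n * (real n - 1)) * real (n choose Q))"
    unfolding binomial_tail_def
  proof (rule sum_mono)
    fix Q assume Q: "Q \<in> {1..n}"
    show "real (M choose (n - Q)) * ((-1)^Q * (u gchoose Q)) \<le> 2 / (real n * (real n - 1)) * real (n choose Q)"
    proof (cases "Q = 1")
      case True
      with M assms have "M < n - Q" by simp
      thus ?thesis using nn by (simp add: binomial_eq_0)
    next
      case False
      thus ?thesis unfolding M using Q u by (intro binomial_mult_alternating_gbinomial_le) auto
    qed
  qed
  also have "\<dots> = 2 / (real n * (real n - 1)) * (\<Sum>Q=1..n. real (n choose Q))"
    by (simp add: sum_distrib_left)
  also have "\<dots> \<le> 2 / (real n * (real n - 1)) * 2 ^ n"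
    using nn sum_binomial_inj_le_power[of id "{1..n}" n] by (intro mult_left_mono) auto
  finally show ?thesis by simp
qed

lemma binomial_tail_nat_ge:
  assumes "M + K = n"
  shows "- binomial_tail M n (real K) \<le> 1"
proof -
  have "- binomial_tail M n (real K) \<le> (\<Sum>Q=1..n. real ((K choose Q) * (M choose (n - Q))))"
    unfolding binomial_tail_def sum_negf[symmetric]
  proof (rule sum_mono)
    fix Q
    have "- ((-1)^Q * (real K gchoose Q)) \<le> real (K choose Q)"
      using abs_ge_minus_self[of "(-1)^Q * (real K gchoose Q)"]
      by (simp add: abs_neg_one_power_mult binomial_gbinomial[symmetric])
    hence "real (M choose (n - Q)) * (- ((-1)^Q * (real K gchoose Q)))
        \<le> real (M choose (n - Q)) * real (K choose Q)"
      by (rule mult_left_mono) simp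
    thus "- (real (M choose (n - Q)) * ((-1)^Q * (real K gchoose Q)))
        \<le> real ((K choose Q) * (M choose (n - Q)))"
      by (simp add: algebra_simps)
  qed
  also have "\<dots> \<le> (\<Sum>Q=0..n. real ((K choose Q) * (M choose (n - Q))))"
    by (intro sum_mono2) auto
  also have "\<dots> = real ((K + M) choose n)"
    by (simp only: of_nat_sum[symmetric] binomial_Vandermonde)
  finally show ?thesis using assms by (simp add: add.commute)
qed

lemma fps_nth_numeral_mult: "fps_nth (numeral k * f) i = numeral k * fps_nth f i"
  by (simp add: numeral_fps_const)

lemma fps_nth_triple_product:
  assumes "t1 + t2 + t3 = real K"
  shows "fps_nth ((2 - fps_binomial_neg t1) * (2 - fps_binomial_neg t2) * (2 - fps_binomial_neg t3)
                  * fps_binomial (of_nat M)) n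
    = real (M choose n)
      - 4 * (binomial_tail M n t1 + binomial_tail M n t2 + binomial_tail M n t3)
      + 2 * (binomial_tail M n (t1 + t2) + binomial_tail M n (t1 + t3) + binomial_tail M n (t2 + t3))
      - binomial_tail M n (real K)"
proof -
  let ?D = fps_binomial_neg and ?B = "fps_binomial (of_nat M) :: real fps"
  have "(2 - ?D t1) * (2 - ?D t2) * (2 - ?D t3)
      = 8 - 4 * (?D t1 + ?D t2 + ?D t3) + 2 * (?D t1 * ?D t2 + ?D t1 * ?D t3 + ?D t2 * ?D t3)
        - ?D t1 * ?D t2 * ?D t3"
    by (simp add: algebra_simps)
  also have "\<dots> = 8 - 4 * (?D t1 + ?D t2 + ?D t3) + 2 * (?D (t1 + t2) + ?D (t1 + t3) + ?D (t2 + t3))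
        - ?D (real K)"
    using assms by (simp add: fps_binomial_neg_add)
  finally have "fps_nth ((2 - ?D t1) * (2 - ?D t2) * (2 - ?D t3) * ?B) n
      = fps_nth ((8 - 4 * (?D t1 + ?D t2 + ?D t3) + 2 * (?D (t1 + t2) + ?D (t1 + t3) + ?D (t2 + t3))
        - ?D (real K)) * ?B) n"
    by (simp only:)
  also have "\<dots> = 8 * fps_nth ?B n - 4 * (fps_nth (?D t1 * ?B) n + fps_nth (?D t2 * ?B) n + fps_nth (?D t3 * ?B) n)
        + 2 * (fps_nth (?D (t1 + t2) * ?B) n + fps_nth (?D (t1 + t3) * ?B) n
               + fps_nth (?D (t2 + t3) * ?B) n)
        - fps_nth (?D (real K) * ?B) n"
    by (simp only: distrib_right left_diff_distrib mult.assoc fps_add_nth fps_sub_nth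
        fps_nth_numeral_mult)
  finally show ?thesis by (simp add: fps_nth_binomial_neg_mult binomial_gbinomial[symmetric])
qed

lemma fps_nth_triple_product_le:
  assumes t: "0 \<le> t1" "t1 \<le> 1" "0 \<le> t2" "t2 \<le> 1" "0 \<le> t3" "t3 \<le> 1"
    and K: "t1 + t2 + t3 = real K" "K \<le> 2" and n: "M + K = n" "n \<ge> 4"
  shows "fps_nth ((2 - fps_binomial_neg t1) * (2 - fps_binomial_neg t2) * (2 - fps_binomial_neg t3)
                  * fps_binomial (of_nat M)) n
     \<le> 2 + 12 * (2 ^ n * (1 + 6 / real n) / (real n * exp 1 * (ln (real n) - ln 2)))
           + 6 * (2 ^ (n + 1) / (real n * (real n - 1)))"
proof -
  define V where "V = 2 ^ n * (1 + 6 / real n) / (real n * exp 1 * (ln (real n) - ln 2))"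
  define W where "W = 2 ^ (n + 1) / (real n * (real n - 1))"
  define T where "T = binomial_tail M n"
  have frac: "- T t \<le> V" if "t \<in> {t1, t2, t3}" for t
  proof -
    have "t = 0 \<or> M < n" using that t K n by (cases "K = 0") auto
    thus ?thesis unfolding T_def V_def using binomial_tail_frac_ge[of n t M] that t n by auto
  qed
  have pair: "T u \<le> W" if "u \<in> {t1 + t2, t1 + t3, t2 + t3}" for u
    unfolding T_def W_def using binomial_tail_pair_le[of u K M n] that t K n by auto
  have "real (M choose n) \<le> 1" using n by (cases "M = n") (auto simp: binomial_eq_0)
  moreover have "- T t1 \<le> V" "- T t2 \<le> V" "- T t3 \<le> V" by (auto intro: frac)
  moreover have "T (t1 + t2) \<le> W" "T (t1 + t3) \<le> W" "T (t2 + t3) \<le> W" by (auto intro: pair)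
  moreover have "- T (real K) \<le> 1"
    unfolding T_def using binomial_tail_nat_ge[OF n(1)] .
  ultimately show ?thesis
    unfolding fps_nth_triple_product[OF K(1)] T_def[symmetric] V_def[symmetric] W_def[symmetric]
    by argo
qed

section \<open>The Lebesgue function\<close>

lemma lag_factor_eq_gbinomial: "lag_factor n k x = (real n * x) gchoose k"
  unfolding lag_factor_def gbinomial_prod_rev by (simp add: atLeast0LessThan)

lemma lebesgue_fun_eq_fps_nth:
  "lebesgue_fun n (l1, l2, l3) = fps_nth (fps_abs (fps_binomial (real n * l1))
       * fps_abs (fps_binomial (real n * l2)) * fps_abs (fps_binomial (real n * l3))) n"
proof -
  define a where "a = (\<lambda>i. \<bar>(real n * l1) gchoose i\<bar>)"
  define b where "b = (\<lambda>i. \<bar>(real n * l2) gchoose i\<bar>)"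
  define c where "c = (\<lambda>i. \<bar>(real n * l3) gchoose i\<bar>)"
  have "fps_nth (fps_abs (fps_binomial (real n * l1)) * fps_abs (fps_binomial (real n * l2))
       * fps_abs (fps_binomial (real n * l3))) n = (\<Sum>k=0..n. \<Sum>i=0..k. a i * b (k - i) * c (n - k))"
    unfolding fps_mult_nth a_def b_def c_def by (simp add: sum_distrib_right)
  also have "\<dots> = (\<Sum>(k, i)\<in>(SIGMA k:{0..n}. {0..k}). a i * b (k - i) * c (n - k))"
    by (rule sum.Sigma) auto
  also have "\<dots> = (\<Sum>ii\<in>idx_set n. \<bar>lagrange_fund n ii (l1, l2, l3)\<bar>)"
  proof (rule sum.reindex_bij_witness[where j = "\<lambda>(k, i). (i, k - i, n - k)"
        and i = "\<lambda>(i1, i2, i3). (i1 + i2, i1)"])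
    fix kk assume "kk \<in> (SIGMA k:{0..n}. {0..k})"
    then obtain k i where kk: "kk = (k, i)" "k \<le> n" "i \<le> k" by auto
    show "(case (case kk of (k, i) \<Rightarrow> (i, k - i, n - k)) of (i1, i2, i3) \<Rightarrow> (i1 + i2, i1)) = kk"
      using kk by auto
    show "(case kk of (k, i) \<Rightarrow> (i, k - i, n - k)) \<in> idx_set n"
      using kk unfolding idx_set_def by auto
    show "\<bar>lagrange_fund n (case kk of (k, i) \<Rightarrow> (i, k - i, n - k)) (l1, l2, l3)\<bar>
          = (case kk of (k, i) \<Rightarrow> a i * b (k - i) * c (n - k))"
      using kk unfolding lagrange_fund_def lag_factor_eq_gbinomial a_def b_def c_def
      by (simp add: abs_mult)
  qed (auto simp: idx_set_def)
  finally show ?thesis unfolding lebesgue_fun_def by simp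
qed

lemma nonneg_eq_nat_plus_frac:
  assumes "0 \<le> (y::real)"
  obtains m t where "y = real m + t" "0 \<le> t" "t < 1"
proof
  show "y = real (nat \<lfloor>y\<rfloor>) + (y - real (nat \<lfloor>y\<rfloor>))" by simp
  show "0 \<le> y - real (nat \<lfloor>y\<rfloor>)" "y - real (nat \<lfloor>y\<rfloor>) < 1"
    using assms by linarith+
qed

lemma lebesgue_fun_le:
  assumes "n \<ge> 4" "l \<in> bary_simplex"
  shows "lebesgue_fun n l
     \<le> 2 + 12 * (2 ^ n * (1 + 6 / real n) / (real n * exp 1 * (ln (real n) - ln 2)))
           + 6 * (2 ^ (n + 1) / (real n * (real n - 1)))"
proof -
  obtain l1 l2 l3 where l: "l = (l1, l2, l3)" "0 \<le> l1" "0 \<le> l2" "0 \<le> l3" "l1 + l2 + l3 = 1"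
    using assms(2) unfolding bary_simplex_def by auto
  obtain m1 t1 where 1: "real n * l1 = real m1 + t1" "0 \<le> t1" "t1 < 1"
    using nonneg_eq_nat_plus_frac[of "real n * l1"] l by auto
  obtain m2 t2 where 2: "real n * l2 = real m2 + t2" "0 \<le> t2" "t2 < 1"
    using nonneg_eq_nat_plus_frac[of "real n * l2"] l by auto
  obtain m3 t3 where 3: "real n * l3 = real m3 + t3" "0 \<le> t3" "t3 < 1"
    using nonneg_eq_nat_plus_frac[of "real n * l3"] l by auto
  have "real n * l1 + real n * l2 + real n * l3 = real n"
    using l(5) by (simp flip: distrib_left)
  hence sum_n: "real (m1 + m2 + m3) + (t1 + t2 + t3) = real n"
    using 1 2 3 by simp
  define K where "K = n - (m1 + m2 + m3)"
  have K: "t1 + t2 + t3 = real K" "K \<le> 2" "m1 + m2 + m3 + K = n"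
    using sum_n 1 2 3 unfolding K_def by linarith+
  let ?F = "\<lambda>m t. fps_binomial (of_nat m) * (2 - fps_binomial_neg t) :: real fps"
  have "lebesgue_fun n l = fps_nth (fps_abs (fps_binomial (of_nat m1 + t1))
      * fps_abs (fps_binomial (of_nat m2 + t2)) * fps_abs (fps_binomial (of_nat m3 + t3))) n"
    unfolding l(1) lebesgue_fun_eq_fps_nth 1(1) 2(1) 3(1) by simp
  also have "\<dots> \<le> fps_nth (?F m1 t1 * ?F m2 t2 * ?F m3 t3) n"
  proof -
    have "fps_coeff_le (fps_abs (fps_binomial (of_nat m1 + t1))
        * fps_abs (fps_binomial (of_nat m2 + t2)) * fps_abs (fps_binomial (of_nat m3 + t3)))
        (?F m1 t1 * ?F m2 t2 * ?F m3 t3)"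
      using 1 2 3
      by (intro fps_coeff_le_mult fps_coeff_le_0_mult fps_coeff_le_0_abs fps_abs_binomial_le) auto
    thus ?thesis unfolding fps_coeff_le_def ..
  qed
  also have "?F m1 t1 * ?F m2 t2 * ?F m3 t3
      = (2 - fps_binomial_neg t1) * (2 - fps_binomial_neg t2) * (2 - fps_binomial_neg t3)
        * fps_binomial (of_nat (m1 + m2 + m3))"
    by (simp add: fps_binomial_add_mult mult_ac)
  also have "fps_nth \<dots> n
      \<le> 2 + 12 * (2 ^ n * (1 + 6 / real n) / (real n * exp 1 * (ln (real n) - ln 2)))
           + 6 * (2 ^ (n + 1) / (real n * (real n - 1)))"
    using 1 2 3 K assms(1) by (intro fps_nth_triple_product_le) auto
  finally show ?thesis .
qed

section \<open>Numerical estimate\<close>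

lemma exp1_mult_ln_le_sqrt:
  assumes "(x::real) > 0"
  shows "exp 1 * ln x \<le> 2 * sqrt x"
proof -
  have "ln (sqrt x / exp 1) \<le> sqrt x / exp 1 - 1"
    using assms by (intro ln_le_minus_one) simp
  hence "ln (sqrt x) \<le> sqrt x / exp 1"
    using assms by (simp add: ln_div)
  thus ?thesis using assms by (simp add: ln_sqrt field_simps)
qed

lemma pair_tails_le:
  assumes "n \<ge> 4"
  shows "6 * (2 ^ (n + 1) / (real n * (real n - 1)))
    \<le> (1 + 69 / real n) * (2 ^ (n + 1) / (exp 1 * real n * (ln (real n) - ln 2)))"
proof -
  define L where "L = ln (real n) - ln 2"
  define s where "s = 2 * sqrt (real n / 2)"
  have n: "real n > 3" using assms by simp
  have L: "0 < L" using assms unfolding L_def by (simp add: ln_less_cancel_iff)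
  have s: "0 \<le> s" "s * s = 2 * real n" "8 \<le> s * s" using assms by (auto simp: s_def algebra_simps)
  have "exp 1 * L \<le> s"
    using exp1_mult_ln_le_sqrt[of "real n / 2"] assms by (simp add: L_def ln_div s_def)
  hence "6 * exp 1 * L * real n \<le> 6 * s * real n"
    using assms by (simp add: mult.assoc mult_left_mono mult_right_mono)
  also have "\<dots> \<le> (real n - 1) * (real n + 69)"
  proof -
    have "8 * 100 \<le> s * s * ((s - 6) * (s - 6) + 100)"
      using s by (intro mult_mono) auto
    thus ?thesis using s by (simp add: algebra_simps)
  qed
  finally have "6 * exp 1 * L / (real n - 1) \<le> 1 + 69 / real n"
    using n by (simp add: field_simps)
  moreover have "6 * (2 ^ (n + 1) / (real n * (real n - 1)))
      = (6 * exp 1 * L / (real n - 1)) * (2 ^ (n + 1) / (exp 1 * real n * L))"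
    using L n by (simp add: field_simps)
  ultimately show ?thesis
    unfolding L_def[symmetric] using L n by (simp only:) (rule mult_right_mono, auto)
qed

lemma lebesgue_fun_bound_le_final:
  fixes n :: nat
  assumes "n \<ge> 4"
  shows "2 + 12 * (2 ^ n * (1 + 6 / real n) / (real n * exp 1 * (ln (real n) - ln 2)))
           + 6 * (2 ^ (n + 1) / (real n * (real n - 1)))
         \<le> (7 + exp 1 * (real n)^2 * ln (real n) / 2 ^ n)
            * (2 ^ (n + 1) / (exp 1 * real n * (ln (real n) - ln 2))) * (1 + 15 / (real n - 3))"
proof -
  define L where "L = ln (real n) - ln 2"
  define W where "W = 2 ^ (n + 1) / (exp 1 * real n * L)"
  define \<mu> where "\<mu> = exp 1 * (real n)^2 * ln (real n) / 2 ^ n"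
  have n: "real n > 3" using assms by simp
  have L: "0 < L" "L \<le> ln (real n)" using assms unfolding L_def by (simp_all add: ln_less_cancel_iff)
  have W: "W > 0" unfolding W_def using L n by simp
  have "12 * (2 ^ n * (1 + 6 / real n) / (real n * exp 1 * L)) = 6 * W + 36 * (W / real n)"
    unfolding W_def using L n by (simp add: field_simps)
  moreover have "6 * (2 ^ (n + 1) / (real n * (real n - 1))) \<le> W + 69 * (W / real n)"
    using pair_tails_le[OF assms] unfolding L_def[symmetric] W_def[symmetric]
    by (simp add: algebra_simps)
  moreover have "2 \<le> \<mu> * W"
  proof -
    have "\<mu> * W = 2 * real n * (ln (real n) / L)"
      unfolding \<mu>_def W_def using L n by (simp add: field_simps power2_eq_square)
    moreover have "2 * 1 \<le> 2 * real n * (ln (real n) / L)"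
      using L n by (intro mult_mono) auto
    ultimately show ?thesis by linarith
  qed
  moreover have "15 * (W / real n) \<le> W * (15 / (real n - 3))"
    using W n by (simp add: field_simps)
  moreover have "0 \<le> \<mu> * W * (15 / (real n - 3))"
    unfolding \<mu>_def using W n by simp
  moreover have "(7 + \<mu>) * W * (1 + 15 / (real n - 3))
      = 7 * W + 7 * (W * (15 / (real n - 3))) + \<mu> * W + \<mu> * W * (15 / (real n - 3))"
    by (simp add: algebra_simps add_divide_distrib)
  ultimately show ?thesis unfolding L_def[symmetric] W_def[symmetric] \<mu>_def[symmetric]
    by argo
qed

theorem theorem2:
  shows "\<exists>\<mu> :: nat \<Rightarrow> real.
     (\<forall>n. 0 \<le> \<mu> n) \<and> \<mu> \<longlonglongrightarrow> 0 \<and>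
     (\<forall>n::nat. n \<ge> 4 \<longrightarrow>
        \<mu> n \<le> 3 * exp 1 * real n * (ln (real n)) ^ 3 / (2 powr (real n / 3))
               + exp 1 * (real n)^2 * ln (real n) / 2 ^ n
      \<and> lebesgue_const n \<le> (7 + \<mu> n) * (2 ^ (n + 1) / (exp 1 * real n * (ln (real n) - ln 2)))
               * (1 + 15 / (real n - 3)))"
proof (intro exI[of _ "\<lambda>n. exp 1 * (real n)^2 * ln (real n) / 2 ^ n"] conjI allI impI)
  fix n :: nat
  show "0 \<le> exp 1 * (real n)^2 * ln (real n) / 2 ^ n" by (cases "n = 0") auto
  assume n: "n \<ge> 4"
  show "exp 1 * (real n)^2 * ln (real n) / 2 ^ n
      \<le> 3 * exp 1 * real n * (ln (real n)) ^ 3 / (2 powr (real n / 3))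
        + exp 1 * (real n)^2 * ln (real n) / 2 ^ n"
    using n by simp
  show "lebesgue_const n \<le> (7 + exp 1 * (real n)^2 * ln (real n) / 2 ^ n)
      * (2 ^ (n + 1) / (exp 1 * real n * (ln (real n) - ln 2))) * (1 + 15 / (real n - 3))"
    unfolding lebesgue_const_def
  proof (rule cSUP_least)
    have "(1, 0, 0) \<in> bary_simplex" unfolding bary_simplex_def by simp
    thus "bary_simplex \<noteq> {}" by blast
    fix l assume "l \<in> bary_simplex"
    from lebesgue_fun_le[OF n this] lebesgue_fun_bound_le_final[OF n]
    show "lebesgue_fun n l \<le> (7 + exp 1 * (real n)^2 * ln (real n) / 2 ^ n)
        * (2 ^ (n + 1) / (exp 1 * real n * (ln (real n) - ln 2))) * (1 + 15 / (real n - 3))"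
      by linarith
  qed
next
  show "(\<lambda>n. exp 1 * (real n)^2 * ln (real n) / 2 ^ n) \<longlonglongrightarrow> 0"
    by real_asymp
qed

end
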